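(* Let $\mathcal H_1=\mathcal H_2=\mathbb C^2$ and let $P_1,P_2$ be orthogonal projectors of rank two on $\mathcal H_2\otimes\mathcal H_1$ with $P_1+P_2=I_2\otimes I_1$. The two-outcome qubit $1$-tester $\{T_1=\frac12P_1,\ T_2=\frac12P_2\}$ is not extremal if and only if at least one of the following holds: (a) $P_1=I_2\otimes|v\rangle\langle v|$ for some unit vector $|v\rangle\in\mathcal H_1$; (b) there are unit vectors $|f\rangle\in\mathcal H_2$, $|e\rangle\in\mathcal H_1$ such that $|f\rangle\otimes|e\rangle\in\operatorname{Supp}(P_1)$ and $|f^\perp\rangle\otimes|e\rangle\in\operatorname{Supp}(P_2)$, where $|f^\perp\rangle$ is a unit vector orthogonal to $|f\rangle$ (equivalently, $P_1=|f\rangle\langle f|\otimes|e\rangle\langle e|+|h\rangle\langle h|\otimes|e^\perp\rangle\langle e^\perp|$ for some unit vectors $|f\rangle,|h\rangle\in\mathcal H_2$, $|e\rangle\in\mathcal H_1$).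
   Context: A quantum $1$-tester with $M$ outcomes is a family of positive operators $\{T_i\}_{i=1}^M$ on $\mathcal H_2\otimes\mathcal H_1$ with $\sum_iT_i=I_2\otimes\rho$ for a density operator $\rho$ on $\mathcal H_1$; extremal means an extreme point of the convex set of all such testers with $M$ outcomes. $\operatorname{Supp}$ denotes the range of a projector. *)

theory Defs
  imports "Jordan_Normal_Form.Schur_Decomposition" "Jordan_Normal_Form.DL_Rank"
begin

(* Hilbert spaces are C^d, vectors are complex vec of dimension d, operators complex mat.
   Tensor product H2 (x) H1: basis index (i2,i1) |-> i2 * d1 + i1 (Kronecker product). *)

definition kron :: "nat \<Rightarrow> nat \<Rightarrow> complex mat \<Rightarrow> complex mat \<Rightarrow> complex mat" where
  "kron d2 d1 A B = mat (d2 * d1) (d2 * d1)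
     (\<lambda>(i, j). A $$ (i div d1, j div d1) * B $$ (i mod d1, j mod d1))"

definition kron_vec :: "nat \<Rightarrow> nat \<Rightarrow> complex vec \<Rightarrow> complex vec \<Rightarrow> complex vec" where
  "kron_vec d2 d1 f e = vec (d2 * d1) (\<lambda>i. f $ (i div d1) * e $ (i mod d1))"

definition cinner :: "complex vec \<Rightarrow> complex vec \<Rightarrow> complex" where
  "cinner u v = (\<Sum>i<dim_vec v. cnj (u $ i) * v $ i)"

definition is_unit_vec :: "nat \<Rightarrow> complex vec \<Rightarrow> bool" where
  "is_unit_vec d v \<longleftrightarrow> v \<in> carrier_vec d \<and> cinner v v = 1"

definition ketbra :: "complex vec \<Rightarrow> complex mat" where
  "ketbra v = mat (dim_vec v) (dim_vec v) (\<lambda>(i, j). v $ i * cnj (v $ j))"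

definition positive_op :: "nat \<Rightarrow> complex mat \<Rightarrow> bool" where
  "positive_op d A \<longleftrightarrow> A \<in> carrier_mat d d \<and> mat_adjoint A = A \<and>
     (\<forall>v \<in> carrier_vec d. 0 \<le> Re (cinner v (A *\<^sub>v v)))"

definition mtrace :: "complex mat \<Rightarrow> complex" where
  "mtrace A = (\<Sum>i<dim_row A. A $$ (i, i))"

definition density_op :: "nat \<Rightarrow> complex mat \<Rightarrow> bool" where
  "density_op d \<rho> \<longleftrightarrow> positive_op d \<rho> \<and> mtrace \<rho> = 1"

definition orth_projector :: "nat \<Rightarrow> complex mat \<Rightarrow> bool" where
  "orth_projector d P \<longleftrightarrow> P \<in> carrier_mat d d \<and> P * P = P \<and> mat_adjoint P = P"

definition supp :: "complex mat \<Rightarrow> complex vec set" where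
  "supp P = {P *\<^sub>v w | w. w \<in> carrier_vec (dim_col P)}"

definition tester :: "nat \<Rightarrow> nat \<Rightarrow> nat \<Rightarrow> complex mat list \<Rightarrow> bool" where
  "tester d2 d1 M T \<longleftrightarrow> length T = M \<and> (\<forall>X \<in> set T. positive_op (d2 * d1) X) \<and>
     (\<exists>\<rho>. density_op d1 \<rho> \<and> foldr (+) T (0\<^sub>m (d2 * d1) (d2 * d1)) = kron d2 d1 (1\<^sub>m d2) \<rho>)"

definition conv_comb :: "real \<Rightarrow> complex mat list \<Rightarrow> complex mat list \<Rightarrow> complex mat list" where
  "conv_comb t X Y = map2 (\<lambda>A B. complex_of_real t \<cdot>\<^sub>m A + complex_of_real (1 - t) \<cdot>\<^sub>m B) X Y"

definition extremal_tester :: "nat \<Rightarrow> nat \<Rightarrow> nat \<Rightarrow> complex mat list \<Rightarrow> bool" where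
  "extremal_tester d2 d1 M T \<longleftrightarrow> tester d2 d1 M T \<and>
     \<not> (\<exists>X Y t. tester d2 d1 M X \<and> tester d2 d1 M Y \<and> X \<noteq> Y \<and> 0 < t \<and> t < 1 \<and>
                T = conv_comb t X Y)"

end

theory Submission
  imports Defs
begin

text \<open>
  Write \<open>K\<^sub>e = I \<otimes> |e\<rangle>\<langle>e|\<close> for a unit vector \<open>e \<in> \<complex>\<^sup>2\<close>.  Both sides of the theorem
  are shown to be equivalent to the statement that \<open>P\<^sub>1\<close> commutes with some \<open>K\<^sub>e\<close>.

  (1) Non-extremality \<open>\<Longleftrightarrow>\<close> commutation.  If \<open>P\<^sub>1 K\<^sub>e = K\<^sub>e P\<^sub>1\<close>, the testers \<open>{P\<^sub>i K\<^sub>e}\<close> and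
  \<open>{P\<^sub>i K\<^sub>e\<^sub>\<bottom>}\<close> average to \<open>T\<close>.  Conversely, in a decomposition \<open>T = t X + (1 - t) Y\<close> positivity
  forces \<open>X\<^sub>i = P\<^sub>i (I \<otimes> \<rho>\<^sub>X)\<close> with \<open>P\<^sub>1\<close> commuting with \<open>I \<otimes> \<rho>\<^sub>X\<close> (likewise for \<open>Y\<close>), and the
  nonzero traceless \<open>\<rho>\<^sub>X - \<rho>\<^sub>Y\<close> is an affine image of a pure state \<open>|e\<rangle>\<langle>e|\<close>.

  (2) Commutation \<open>\<Longleftrightarrow>\<close> (a) or (b).  If \<open>P\<^sub>1\<close> commutes with \<open>K\<^sub>e\<close>, it is block diagonal,
  \<open>P\<^sub>1 = V Q V\<^sup>* + W R W\<^sup>*\<close> with the isometries \<open>V = V\<^sub>e\<close>, \<open>W = V\<^sub>e\<^sub>\<bottom>\<close> (\<open>V\<^sub>e g = g \<otimes> e\<close>) and \<open>2 \<times> 2\<close>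
  projectors \<open>Q, R\<close>; classifying these gives (a) or (b), the rank hypotheses excluding
  \<open>P\<^sub>1 = 0\<close> and \<open>P\<^sub>2 = 0\<close>.  Conversely (a) is commutation itself, and (b) makes \<open>P\<^sub>1 K\<^sub>e\<close> Hermitian.
\<close>

section \<open>Finite index bookkeeping for qubits\<close>

lemma sum_2: "(\<Sum>i<(2::nat). f i) = f 0 + (f 1 :: 'a::comm_monoid_add)"
  "(\<Sum>i\<in>{0..<(2::nat)}. f i) = f 0 + f 1"
  by (simp_all add: numeral_eq_Suc lessThan_Suc atLeast0LessThan add_ac)

lemma sum_4: "(\<Sum>i<(4::nat). f i) = f 0 + f 1 + f 2 + (f 3 :: 'a::comm_monoid_add)"
  "(\<Sum>i\<in>{0..<(4::nat)}. f i) = f 0 + f 1 + f 2 + f 3"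
  by (simp_all add: numeral_eq_Suc lessThan_Suc atLeast0LessThan add_ac)

lemma less_2_cases: "(i::nat) < 2 \<longleftrightarrow> i = 0 \<or> i = 1" by auto
lemma less_4_cases: "(i::nat) < 4 \<longleftrightarrow> i = 0 \<or> i = 1 \<or> i = 2 \<or> i = 3" by auto


section \<open>The adjoint and the standard inner product\<close>

lemma adj_dims[simp]: "dim_row (mat_adjoint A) = dim_col A" "dim_col (mat_adjoint A) = dim_row A"
  unfolding mat_adjoint_def by auto

lemma adj_carrier_iff[simp]: "mat_adjoint A \<in> carrier_mat n m \<longleftrightarrow> A \<in> carrier_mat m n"
  unfolding carrier_mat_def by auto

lemma adj_index[simp]:
  "i < dim_col A \<Longrightarrow> j < dim_row A \<Longrightarrow> mat_adjoint A $$ (i, j) = cnj (A $$ (j, i))"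
  unfolding mat_adjoint_def by (simp add: mat_of_rows_index)

lemma adj_adj[simp]: "mat_adjoint (mat_adjoint (A :: complex mat)) = A"
  by (rule eq_matI) auto

lemma adj_mult:
  fixes A B :: "complex mat"
  assumes "A \<in> carrier_mat n m" "B \<in> carrier_mat m k"
  shows "mat_adjoint (A * B) = mat_adjoint B * mat_adjoint A"
  by (rule eq_matI)
    (use assms in \<open>auto simp: scalar_prod_def cnj_sum mult.commute intro!: sum.cong\<close>)

lemma adj_minus:
  fixes A B :: "complex mat"
  assumes "A \<in> carrier_mat n m" "B \<in> carrier_mat n m"
  shows "mat_adjoint (A - B) = mat_adjoint A - mat_adjoint B"
  by (rule eq_matI) (use assms in auto)

lemma adj_smult: "mat_adjoint (c \<cdot>\<^sub>m (A :: complex mat)) = cnj c \<cdot>\<^sub>m mat_adjoint A"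
  by (rule eq_matI) auto

lemma adj_one[simp]: "mat_adjoint (1\<^sub>m n :: complex mat) = 1\<^sub>m n"
  by (rule eq_matI) auto

lemma adj_zero[simp]: "mat_adjoint (0\<^sub>m n m :: complex mat) = 0\<^sub>m m n"
  by (rule eq_matI) auto

text \<open>Matrix associativity and distributivity, with the dimension side conditions phrased so
  that \<open>simp\<close> can discharge them.\<close>

lemma massoc: "dim_col A = dim_row B \<Longrightarrow> dim_col B = dim_row C \<Longrightarrow>
    A * B * C = A * (B * (C :: 'a::comm_ring mat))"
  by (rule assoc_mult_mat[of A "dim_row A" "dim_col A" B "dim_col B" C "dim_col C"]) auto

lemma massoc_v: "dim_col A = dim_row B \<Longrightarrow> dim_col B = dim_vec v \<Longrightarrow>
    (A * B) *\<^sub>v v = A *\<^sub>v (B *\<^sub>v (v :: 'a::comm_ring vec))"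
  by (rule assoc_mult_mat_vec[of A "dim_row A" "dim_col A" B "dim_col B"]) auto

lemma mdist_add_r: "dim_col A = dim_row B \<Longrightarrow> dim_row B = dim_row C \<Longrightarrow> dim_col B = dim_col C \<Longrightarrow>
    A * (B + C) = A * B + A * (C :: 'a::comm_ring mat)"
  by (rule mult_add_distrib_mat[of A "dim_row A" "dim_col A" B "dim_col B"]) auto

lemma mdist_add_l: "dim_col A = dim_row C \<Longrightarrow> dim_row A = dim_row B \<Longrightarrow> dim_col A = dim_col B \<Longrightarrow>
    (A + B) * C = A * C + B * (C :: 'a::comm_ring mat)"
  by (rule add_mult_distrib_mat[of A "dim_row A" "dim_col A" B C "dim_col C"]) auto

lemma mdist_minus_r: "dim_col A = dim_row B \<Longrightarrow> dim_row B = dim_row C \<Longrightarrow> dim_col B = dim_col C \<Longrightarrow>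
    A * (B - C) = A * B - A * (C :: 'a::comm_ring mat)"
  by (rule mult_minus_distrib_mat[of A "dim_row A" "dim_col A" B "dim_col B"]) auto

lemma mdist_minus_l: "dim_col A = dim_row C \<Longrightarrow> dim_row A = dim_row B \<Longrightarrow> dim_col A = dim_col B \<Longrightarrow>
    (A - B) * C = A * C - B * (C :: 'a::comm_ring mat)"
  by (rule minus_mult_distrib_mat[of A "dim_row A" "dim_col A" B C "dim_col C"]) auto

lemma smult_mat_vec: "dim_vec v = dim_col A \<Longrightarrow> (k \<cdot>\<^sub>m A) *\<^sub>v v = k \<cdot>\<^sub>v (A *\<^sub>v (v :: complex vec))"
  by (rule eq_vecI) (auto simp: scalar_prod_def sum_distrib_left mult_ac intro!: sum.cong)

lemma mat_eq_by_vec: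
  fixes A B :: "complex mat"
  assumes A: "A \<in> carrier_mat n m" and B: "B \<in> carrier_mat n m"
    and eq: "\<And>g. g \<in> carrier_vec m \<Longrightarrow> A *\<^sub>v g = B *\<^sub>v g"
  shows "A = B"
proof (rule eq_matI)
  fix i j assume "i < dim_row B" "j < dim_col B"
  hence i: "i < n" and j: "j < m" using B by auto
  have "A $$ (i, j) = (A *\<^sub>v unit_vec m j) $ i"
    using A i j scalar_prod_right_unit[of j m "row A i"] by simp
  also have "\<dots> = (B *\<^sub>v unit_vec m j) $ i" using eq[of "unit_vec m j"] by simp
  also have "\<dots> = B $$ (i, j)"
    using B i j scalar_prod_right_unit[of j m "row B i"] by simp
  finally show "A $$ (i, j) = B $$ (i, j)" .
qed (use A B in auto)

lemma cinner_add_right: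
  "v \<in> carrier_vec n \<Longrightarrow> w \<in> carrier_vec n \<Longrightarrow> cinner u (v + w) = cinner u v + cinner u w"
  unfolding cinner_def by (simp add: distrib_left sum.distrib)

lemma cinner_add_left: "u \<in> carrier_vec n \<Longrightarrow> v \<in> carrier_vec n \<Longrightarrow> w \<in> carrier_vec n \<Longrightarrow>
    cinner (u + v) w = cinner u w + cinner v w"
  unfolding cinner_def by (simp add: distrib_right sum.distrib)

lemma cinner_smult_right: "cinner u (c \<cdot>\<^sub>v v) = c * cinner u v"
  unfolding cinner_def by (simp add: sum_distrib_left mult_ac)

lemma cinner_smult_left:
  "u \<in> carrier_vec n \<Longrightarrow> v \<in> carrier_vec n \<Longrightarrow> cinner (c \<cdot>\<^sub>v u) v = cnj c * cinner u v"
  unfolding cinner_def by (simp add: sum_distrib_left mult_ac)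

lemma cinner_adj:
  fixes A :: "complex mat"
  assumes "A \<in> carrier_mat n m" "u \<in> carrier_vec n" "v \<in> carrier_vec m"
  shows "cinner u (A *\<^sub>v v) = cinner (mat_adjoint A *\<^sub>v u) v"
proof -
  have "cinner u (A *\<^sub>v v) = (\<Sum>i<n. \<Sum>j<m. cnj (u$i) * (A$$(i,j) * v$j))"
    using assms unfolding cinner_def
    by (auto simp: scalar_prod_def sum_distrib_left atLeast0LessThan)
  also have "\<dots> = (\<Sum>j<m. \<Sum>i<n. cnj (u$i) * (A$$(i,j) * v$j))" by (rule sum.swap)
  also have "\<dots> = cinner (mat_adjoint A *\<^sub>v u) v"
    using assms unfolding cinner_def
    by (auto simp: scalar_prod_def sum_distrib_right sum_distrib_left atLeast0LessThan cnj_sum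
        mult_ac intro!: sum.cong)
  finally show ?thesis .
qed

lemma cinner_self_Re: "Re (cinner v v) = (\<Sum>i<dim_vec v. (cmod (v$i))\<^sup>2)"
proof -
  have "Re (cnj z * z) = (cmod z)\<^sup>2" for z :: complex
    by (metis Re_complex_of_real complex_norm_square mult.commute)
  thus ?thesis unfolding cinner_def Re_sum by simp
qed

lemma cinner_self_ge0: "0 \<le> Re (cinner v v)"
  unfolding cinner_self_Re by (auto intro!: sum_nonneg)

lemma cinner_self_eq_0:
  assumes "v \<in> carrier_vec n" "Re (cinner v v) = 0"
  shows "v = 0\<^sub>v n"
proof -
  have "\<And>i. i < n \<Longrightarrow> (cmod (v$i))\<^sup>2 = 0"
    using assms cinner_self_Re[of v] sum_nonneg_eq_0_iff[of "{..<n}" "\<lambda>i. (cmod (v$i))\<^sup>2"] by auto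
  thus ?thesis using assms by (intro eq_vecI) auto
qed


section \<open>Positive operators\<close>

text \<open>For a positive operator, \<open>\<langle>v, A v\<rangle> = 0\<close> forces \<open>A v = 0\<close>: otherwise the quadratic
  form would become negative along \<open>v - s A v\<close> for small \<open>s > 0\<close>.\<close>

lemma positive_op_kernel:
  fixes A :: "complex mat"
  assumes A: "positive_op n A" and v: "v \<in> carrier_vec n" and z: "Re (cinner v (A *\<^sub>v v)) = 0"
  shows "A *\<^sub>v v = 0\<^sub>v n"
proof -
  have Ac: "A \<in> carrier_mat n n" and h: "mat_adjoint A = A"
    and pos: "\<And>u. u \<in> carrier_vec n \<Longrightarrow> 0 \<le> Re (cinner u (A *\<^sub>v u))"
    using A unfolding positive_op_def by auto
  define w where "w = A *\<^sub>v v"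
  have w: "w \<in> carrier_vec n" using Ac v w_def by auto
  define a where "a = Re (cinner w w)"
  define c where "c = Re (cinner w (A *\<^sub>v w))"
  have a0: "0 \<le> a" unfolding a_def by (rule cinner_self_ge0)
  have c0: "0 \<le> c" unfolding c_def using pos w by auto
  have quadratic: "0 \<le> 2 * s * a + s\<^sup>2 * c" for s :: real
  proof -
    define u where "u = v + complex_of_real s \<cdot>\<^sub>v w"
    have u: "u \<in> carrier_vec n" using v w u_def by auto
    have Au: "A *\<^sub>v u = w + complex_of_real s \<cdot>\<^sub>v (A *\<^sub>v w)"
      unfolding u_def w_def using Ac v w w_def
      by (simp add: mult_add_distrib_mat_vec mult_mat_vec)
    have vAw: "cinner v (A *\<^sub>v w) = cinner w w"
      using cinner_adj[OF Ac v w] h w_def by simp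
    have "cinner u (A *\<^sub>v u) = cinner u (w + complex_of_real s \<cdot>\<^sub>v (A *\<^sub>v w))"
      using Au by simp
    also have "\<dots> = cinner v w + complex_of_real s * cinner v (A *\<^sub>v w)
        + cnj (complex_of_real s) * cinner w w
        + cnj (complex_of_real s) * (complex_of_real s * cinner w (A *\<^sub>v w))"
      unfolding u_def using v w Ac
      by (simp add: cinner_add_left[of _ n] cinner_add_right[of _ n] cinner_smult_left[of _ n]
          cinner_smult_right distrib_left)
    finally have "Re (cinner u (A *\<^sub>v u)) = 2 * s * a + s\<^sup>2 * c"
      using z vAw unfolding a_def c_def w_def by (simp add: power2_eq_square algebra_simps)
    thus ?thesis using pos[OF u] by simp
  qed
  have "a = 0"
  proof (rule ccontr)
    assume "a \<noteq> 0"
    hence ap: "a > 0" using a0 by auto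
    define x where "x = a / (c + 1)"
    have xp: "x > 0" unfolding x_def using ap c0 by auto
    have "x * c < a" unfolding x_def using ap c0 by (simp add: divide_less_eq algebra_simps)
    hence "x * (x * c - 2 * a) < 0" using xp ap by (intro mult_pos_neg) auto
    moreover have "2 * (-x) * a + (-x)\<^sup>2 * c = x * (x * c - 2 * a)"
      by (simp add: algebra_simps power2_eq_square)
    ultimately show False using quadratic[of "-x"] by simp
  qed
  thus ?thesis using cinner_self_eq_0[OF w] a_def w_def by simp
qed

lemma herm_idem_positive:
  fixes A :: "complex mat"
  assumes A: "A \<in> carrier_mat n n" and h: "mat_adjoint A = A" and i: "A * A = A"
  shows "positive_op n A"
  unfolding positive_op_def
proof (intro conjI ballI A h)
  fix v :: "complex vec" assume v: "v \<in> carrier_vec n"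
  have "A *\<^sub>v v = A *\<^sub>v (A *\<^sub>v v)" using i A v by (metis assoc_mult_mat_vec)
  hence "cinner v (A *\<^sub>v v) = cinner (A *\<^sub>v v) (A *\<^sub>v v)"
    using cinner_adj[OF A v, of "A *\<^sub>v v"] h A v by auto
  thus "0 \<le> Re (cinner v (A *\<^sub>v v))" using cinner_self_ge0 by simp
qed

lemma positive_op_smult:
  assumes "positive_op n A" "0 \<le> c"
  shows "positive_op n (complex_of_real c \<cdot>\<^sub>m A)"
  using assms unfolding positive_op_def
  by (auto simp: adj_smult smult_mat_vec cinner_smult_right)

lemma kernel_of_positive_combination:
  fixes A B C :: "complex mat"
  assumes A: "positive_op n A" and B: "positive_op n B" and s: "0 < s" and s': "0 \<le> s'"
    and C: "C = complex_of_real s \<cdot>\<^sub>m A + complex_of_real s' \<cdot>\<^sub>m B"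
    and v: "v \<in> carrier_vec n" and Cv: "C *\<^sub>v v = 0\<^sub>v n"
  shows "A *\<^sub>v v = 0\<^sub>v n"
proof -
  have Ac: "A \<in> carrier_mat n n" and Bc: "B \<in> carrier_mat n n"
    using A B unfolding positive_op_def by auto
  have "C *\<^sub>v v = (complex_of_real s \<cdot>\<^sub>m A) *\<^sub>v v + (complex_of_real s' \<cdot>\<^sub>m B) *\<^sub>v v"
    unfolding C by (rule add_mult_distrib_mat_vec[of _ n n]) (use Ac Bc v in auto)
  also have "\<dots> = complex_of_real s \<cdot>\<^sub>v (A *\<^sub>v v) + complex_of_real s' \<cdot>\<^sub>v (B *\<^sub>v v)"
    using Ac Bc v by (simp add: smult_mat_vec)
  finally have "C *\<^sub>v v = complex_of_real s \<cdot>\<^sub>v (A *\<^sub>v v) + complex_of_real s' \<cdot>\<^sub>v (B *\<^sub>v v)" .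
  hence "complex_of_real s \<cdot>\<^sub>v (A *\<^sub>v v) + complex_of_real s' \<cdot>\<^sub>v (B *\<^sub>v v) = 0\<^sub>v n"
    using Cv by simp
  hence "cinner v (complex_of_real s \<cdot>\<^sub>v (A *\<^sub>v v) + complex_of_real s' \<cdot>\<^sub>v (B *\<^sub>v v)) = 0"
    by (simp add: cinner_def)
  hence "complex_of_real s * cinner v (A *\<^sub>v v) + complex_of_real s' * cinner v (B *\<^sub>v v) = 0"
    using Ac Bc v by (simp add: cinner_add_right[of _ n] cinner_smult_right)
  hence "Re (complex_of_real s * cinner v (A *\<^sub>v v) + complex_of_real s' * cinner v (B *\<^sub>v v)) = 0"
    by simp
  hence "s * Re (cinner v (A *\<^sub>v v)) + s' * Re (cinner v (B *\<^sub>v v)) = 0"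
    by simp
  moreover have "0 \<le> Re (cinner v (A *\<^sub>v v))" "0 \<le> s' * Re (cinner v (B *\<^sub>v v))"
    using A B v s' unfolding positive_op_def by auto
  ultimately have "s * Re (cinner v (A *\<^sub>v v)) = 0" using s
    by (metis add_nonneg_eq_0_iff mult_nonneg_nonneg less_imp_le)
  hence "Re (cinner v (A *\<^sub>v v)) = 0" using s by simp
  thus ?thesis using positive_op_kernel[OF A v] by simp
qed

lemma mult_zero_by_kernel_inclusion:
  fixes A Q R :: "complex mat"
  assumes A: "A \<in> carrier_mat k n" and R: "R \<in> carrier_mat n m" and QR: "Q * R = 0\<^sub>m l m"
    and Q: "Q \<in> carrier_mat l n"
    and ker: "\<And>v. v \<in> carrier_vec n \<Longrightarrow> Q *\<^sub>v v = 0\<^sub>v l \<Longrightarrow> A *\<^sub>v v = 0\<^sub>v k"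
  shows "A * R = 0\<^sub>m k m"
proof (rule eq_matI)
  fix i j assume "i < dim_row (0\<^sub>m k m :: complex mat)" "j < dim_col (0\<^sub>m k m :: complex mat)"
  hence i: "i < k" and j: "j < m" by auto
  have "Q *\<^sub>v col R j = col (Q * R) j" using col_mult2[OF Q R j] by simp
  hence "A *\<^sub>v col R j = 0\<^sub>v k" using ker R j QR by simp
  hence "(A *\<^sub>v col R j) $ i = 0" using i by simp
  thus "(A * R) $$ (i, j) = 0\<^sub>m k m $$ (i, j)" using A R i j by simp
qed (use A R in auto)
section \<open>Qubit geometry\<close>

lemma unit_vec_2_iff:
  "is_unit_vec 2 e \<longleftrightarrow> dim_vec e = 2 \<and> cnj (e$0) * e$0 + cnj (e$1) * e$1 = 1"
  unfolding is_unit_vec_def cinner_def carrier_vec_def by (auto simp: sum_2)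

lemma cinner_2: "dim_vec v = 2 \<Longrightarrow> cinner u v = cnj (u$0) * v$0 + cnj (u$1) * v$1"
  unfolding cinner_def by (simp add: sum_2)

lemma ketbra_dims[simp]: "dim_row (ketbra f) = dim_vec f" "dim_col (ketbra f) = dim_vec f"
  unfolding ketbra_def by auto

lemma ketbra_adj: "mat_adjoint (ketbra e) = ketbra e"
  unfolding ketbra_def by (rule eq_matI) auto

lemma ketbra_vec: "dim_vec f = 2 \<Longrightarrow> g \<in> carrier_vec 2 \<Longrightarrow> ketbra f *\<^sub>v g = cinner f g \<cdot>\<^sub>v f"
  unfolding ketbra_def
  by (rule eq_vecI) (auto simp: less_2_cases scalar_prod_def sum_2 cinner_2 algebra_simps)

lemma ketbra_idem:
  assumes u: "is_unit_vec n e"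
  shows "ketbra e * ketbra e = ketbra e"
proof (rule eq_matI)
  have d: "dim_vec e = n" and c: "(\<Sum>k<n. cnj (e$k) * e$k) = 1"
    using u unfolding is_unit_vec_def cinner_def by auto
  fix i j assume ij: "i < dim_row (ketbra e)" "j < dim_col (ketbra e)"
  hence "(ketbra e * ketbra e) $$ (i,j) = e$i * cnj (e$j) * (\<Sum>k<n. cnj (e$k) * e$k)" using d
    by (simp add: ketbra_def scalar_prod_def sum_distrib_left atLeast0LessThan mult_ac)
  thus "(ketbra e * ketbra e) $$ (i,j) = ketbra e $$ (i,j)" using c ij d by (simp add: ketbra_def)
qed auto

lemma ketbra_density: "is_unit_vec 2 e \<Longrightarrow> density_op 2 (ketbra e)"
  unfolding density_op_def
proof
  assume u: "is_unit_vec 2 e"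
  thus "positive_op 2 (ketbra e)"
    by (intro herm_idem_positive ketbra_adj ketbra_idem) (auto simp: is_unit_vec_def)
  show "mtrace (ketbra e) = 1"
    using u unfolding unit_vec_2_iff mtrace_def ketbra_def by (simp add: sum_2 mult.commute)
qed

definition perp :: "complex vec \<Rightarrow> complex vec" where
  "perp e = vec 2 (\<lambda>i. if i = 0 then - cnj (e$1) else cnj (e$0))"

lemma perp_carrier[simp]: "perp e \<in> carrier_vec 2" "dim_vec (perp e) = 2"
  unfolding perp_def by auto

lemma perp_unit: "is_unit_vec 2 e \<Longrightarrow> is_unit_vec 2 (perp e)"
  unfolding unit_vec_2_iff perp_def by (auto simp: mult.commute add.commute)

lemma perp_orth: "cinner e (perp e) = 0"
  unfolding perp_def cinner_def by (simp add: sum_2)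

text \<open>Resolution of the identity for an orthonormal basis \<open>f, f'\<close> of \<open>\<complex>\<^sup>2\<close>: the matrix
  with columns \<open>f, f'\<close> is unitary, so \<open>|f\<rangle>\<langle>f| + |f'\<rangle>\<langle>f'| = U U\<^sup>* = I\<close>.\<close>

lemma ketbra_onb_sum:
  assumes f: "is_unit_vec 2 f" and p: "is_unit_vec 2 fp" and o: "cinner f fp = 0"
  shows "ketbra f + ketbra fp = 1\<^sub>m 2"
proof -
  define U where "U = mat 2 2 (\<lambda>(i,j). if j = 0 then f$i else fp$i)"
  have U: "U \<in> carrier_mat 2 2" unfolding U_def by auto
  have o': "cinner fp f = 0"
    using o f p unfolding unit_vec_2_iff
    by (metis (no_types, lifting) cinner_2 complex_cnj_add complex_cnj_cnj complex_cnj_mult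
        complex_cnj_zero mult.commute)
  have "mat_adjoint U * U = 1\<^sub>m 2"
    using f p o o' unfolding U_def unit_vec_2_iff cinner_2
    by (intro eq_matI) (auto simp: less_2_cases scalar_prod_def sum_2 cinner_2)
  hence "U * mat_adjoint U = 1\<^sub>m 2"
    using mat_mult_left_right_inverse[of "mat_adjoint U" 2 U] U by auto
  moreover have "ketbra f + ketbra fp = U * mat_adjoint U"
    using f p unfolding U_def unit_vec_2_iff ketbra_def
    by (intro eq_matI) (auto simp: less_2_cases scalar_prod_def sum_2)
  ultimately show ?thesis by simp
qed

lemma onb_expansion:
  assumes f: "is_unit_vec 2 f" and p: "is_unit_vec 2 fp" and o: "cinner f fp = 0"
    and g: "g \<in> carrier_vec 2"
  shows "g = cinner f g \<cdot>\<^sub>v f + cinner fp g \<cdot>\<^sub>v fp"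
proof -
  have fd: "dim_vec f = 2" and pd: "dim_vec fp = 2" using f p unfolding unit_vec_2_iff by auto
  have "g = (ketbra f + ketbra fp) *\<^sub>v g" using ketbra_onb_sum[OF f p o] g by simp
  also have "\<dots> = ketbra f *\<^sub>v g + ketbra fp *\<^sub>v g"
    by (rule add_mult_distrib_mat_vec[of _ 2 2]) (use fd pd g in auto)
  finally show ?thesis using ketbra_vec[OF fd g] ketbra_vec[OF pd g] by simp
qed

definition herm2 :: "real \<Rightarrow> real \<Rightarrow> complex \<Rightarrow> complex mat" where
  "herm2 a d b = mat 2 2 (\<lambda>(i,j). if i = 0 then (if j = 0 then complex_of_real a else b)
                                  else (if j = 0 then cnj b else complex_of_real d))"

lemma herm2_of_hermitian:
  fixes Q :: "complex mat"
  assumes Q: "Q \<in> carrier_mat 2 2" and h: "mat_adjoint Q = Q"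
  shows "Q = herm2 (Re (Q $$ (0,0))) (Re (Q $$ (1,1))) (Q $$ (0,1))"
proof -
  have hh: "\<And>i j. i < 2 \<Longrightarrow> j < 2 \<Longrightarrow> Q $$ (i,j) = cnj (Q $$ (j,i))"
    using h Q by (metis adj_index carrier_matD(1) carrier_matD(2))
  have "Q $$ (i,i) = complex_of_real (Re (Q $$ (i,i)))" if "i < 2" for i
    using hh[OF that that] by (simp add: complex_eq_iff)
  thus ?thesis using Q hh[of 1 0] unfolding herm2_def
    by (intro eq_matI) (auto simp: less_2_cases)
qed

lemma herm2_pure_state:
  assumes tr: "a + d = 1" and det: "a * d = (cmod b)\<^sup>2"
  shows "\<exists>f. is_unit_vec 2 f \<and> ketbra f = herm2 a d b"
proof (cases "a = 0")
  case True
  hence "b = 0" "d = 1" using tr det by auto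
  define f :: "complex vec" where "f = vec 2 (\<lambda>i. if i = 0 then 0 else 1)"
  have "is_unit_vec 2 f \<and> ketbra f = herm2 a d b"
    unfolding unit_vec_2_iff f_def ketbra_def herm2_def using True \<open>b = 0\<close> \<open>d = 1\<close>
    by (auto intro!: eq_matI simp: less_2_cases)
  thus ?thesis by blast
next
  case False
  have apos: "a > 0"
  proof (rule ccontr)
    assume "\<not> a > 0"
    hence "a < 0" "d > 0" using False tr by auto
    hence "a * d < 0" by (rule mult_neg_pos)
    thus False using det by simp
  qed
  define s where "s = complex_of_real (sqrt a)"
  have sn: "s \<noteq> 0" and cs: "cnj s = s" and ss: "s * s = complex_of_real a"
    unfolding s_def using apos by (auto simp flip: of_real_mult)
  have bb: "cnj b * b = complex_of_real a * complex_of_real d"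
    using det complex_norm_square[of b] by (simp add: mult.commute flip: of_real_mult)
  define f :: "complex vec" where "f = vec 2 (\<lambda>i. if i = 0 then s else cnj b / s)"
  have f0: "f$0 = s" and f1: "f$1 = cnj b / s" and fd: "dim_vec f = 2" unfolding f_def by auto
  have e00: "f$0 * cnj (f$0) = complex_of_real a" using cs ss f0 by simp
  have e01: "f$0 * cnj (f$1) = b" using cs sn f0 f1 by simp
  have e10: "f$1 * cnj (f$0) = cnj b" using cs sn f0 f1 by simp
  have e11: "f$1 * cnj (f$1) = complex_of_real d"
  proof -
    have "f$1 * cnj (f$1) = cnj b * b / (s * s)" using cs f1 by simp
    also have "\<dots> = complex_of_real d" using bb ss apos by simp
    finally show ?thesis .
  qed
  have "is_unit_vec 2 f"
    unfolding unit_vec_2_iff using fd e00 e11 tr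
    by (simp add: mult.commute) (metis of_real_add of_real_1)
  moreover have "ketbra f = herm2 a d b"
    unfolding herm2_def ketbra_def using fd e00 e01 e10 e11
    by (intro eq_matI) (auto simp: less_2_cases)
  ultimately show ?thesis by blast
qed

lemma projector_2_cases:
  fixes Q :: "complex mat"
  assumes Q: "Q \<in> carrier_mat 2 2" and h: "mat_adjoint Q = Q" and i: "Q * Q = Q"
  shows "Q = 0\<^sub>m 2 2 \<or> Q = 1\<^sub>m 2 \<or> (\<exists>f. is_unit_vec 2 f \<and> Q = ketbra f)"
proof -
  define a where "a = Re (Q $$ (0,0))"
  define d where "d = Re (Q $$ (1,1))"
  define b where "b = Q $$ (0,1)"
  have Qeq: "Q = herm2 a d b" unfolding a_def d_def b_def by (rule herm2_of_hermitian[OF Q h])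
  have bb: "b * cnj b = complex_of_real ((cmod b)\<^sup>2)" by (rule complex_norm_square[symmetric])
  have entry: "(herm2 a d b * herm2 a d b) $$ (i,j) = herm2 a d b $$ (i,j)" if "i < 2" "j < 2" for i j
    using i that unfolding Qeq by simp
  have "complex_of_real a * complex_of_real a + b * cnj b = complex_of_real a"
    using entry[of 0 0] unfolding herm2_def by (simp add: scalar_prod_def sum_2)
  hence e1: "a * a + (cmod b)\<^sup>2 = a"
    unfolding bb by (metis of_real_add of_real_mult of_real_eq_iff)
  have "cnj b * b + complex_of_real d * complex_of_real d = complex_of_real d"
    using entry[of 1 1] unfolding herm2_def by (simp add: scalar_prod_def sum_2)
  hence e3: "d * d + (cmod b)\<^sup>2 = d"
    unfolding mult.commute[of "cnj b"] bb by (metis add.commute of_real_add of_real_mult of_real_eq_iff)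
  have e2: "complex_of_real a * b + b * complex_of_real d = b"
    using entry[of 0 1] unfolding herm2_def by (simp add: scalar_prod_def sum_2)
  show ?thesis
  proof (cases "b = 0")
    case True
    hence "a = 0 \<or> a = 1" "d = 0 \<or> d = 1" using e1 e3 by (auto simp: algebra_simps)
    moreover have "herm2 0 0 0 = 0\<^sub>m 2 2" "herm2 1 1 0 = 1\<^sub>m 2"
      unfolding herm2_def by (auto intro!: eq_matI simp: less_2_cases)
    ultimately show ?thesis
      using herm2_pure_state[of 1 0 0] herm2_pure_state[of 0 1 0] True unfolding Qeq by auto
  next
    case False
    have "b * (complex_of_real (a + d) - 1) = 0" using e2 by (simp add: algebra_simps)
    hence "a + d = 1" using False by (metis eq_iff_diff_eq_0 mult_eq_0_iff of_real_eq_1_iff)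
    moreover from this have "d = 1 - a" by simp
    hence "a * d = a - a * a" by (simp add: right_diff_distrib)
    hence "a * d = (cmod b)\<^sup>2" using e1 by simp
    ultimately obtain f where "is_unit_vec 2 f" "ketbra f = herm2 a d b"
      using herm2_pure_state by blast
    thus ?thesis unfolding Qeq by metis
  qed
qed

text \<open>A nonzero traceless Hermitian \<open>\<sigma>\<close> on \<open>\<complex>\<^sup>2\<close> is, up to an affine change, a pure state:
  \<open>|e\<rangle>\<langle>e| = \<sigma>/(2\<parallel>\<sigma>\<parallel>) + I/2\<close>, where \<open>\<parallel>\<sigma>\<parallel>\<close> is its positive eigenvalue.\<close>

lemma traceless_hermitian_to_pure_state:
  fixes \<sigma> :: "complex mat"
  assumes S: "\<sigma> \<in> carrier_mat 2 2" and h: "mat_adjoint \<sigma> = \<sigma>"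
    and tr: "\<sigma> $$ (0,0) + \<sigma> $$ (1,1) = 0" and nz: "\<sigma> \<noteq> 0\<^sub>m 2 2"
  shows "\<exists>e c1 c2. is_unit_vec 2 e \<and> ketbra e = c1 \<cdot>\<^sub>m \<sigma> + c2 \<cdot>\<^sub>m 1\<^sub>m 2"
proof -
  define a where "a = Re (\<sigma> $$ (0,0))"
  define b where "b = \<sigma> $$ (0,1)"
  have "\<sigma> = herm2 a (Re (\<sigma> $$ (1,1))) b"
    unfolding a_def b_def by (rule herm2_of_hermitian[OF S h])
  moreover have "Re (\<sigma> $$ (1,1)) = - a" using tr unfolding a_def by (metis add_eq_0_iff minus_complex.sel(1) zero_complex.sel(1) plus_complex.sel(1))
  ultimately have Seq: "\<sigma> = herm2 a (- a) b" by simp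
  have "a \<noteq> 0 \<or> b \<noteq> 0"
    using nz unfolding Seq herm2_def by (auto intro!: eq_matI simp: less_2_cases)
  hence pos: "a\<^sup>2 + (cmod b)\<^sup>2 > 0" by (auto simp: add_pos_nonneg add_nonneg_pos)
  define L where "L = sqrt (a\<^sup>2 + (cmod b)\<^sup>2)"
  have Lpos: "L > 0" and LL: "L\<^sup>2 = a\<^sup>2 + (cmod b)\<^sup>2" unfolding L_def using pos by auto
  define x where "x = a / (2 * L)"
  define y where "y = b / complex_of_real (2 * L)"
  have "x\<^sup>2 + (cmod y)\<^sup>2 = (a\<^sup>2 + (cmod b)\<^sup>2) / (4 * L\<^sup>2)"
    unfolding x_def y_def using Lpos
    by (simp add: power_divide norm_divide power_mult_distrib add_divide_distrib)
  also have "\<dots> = 1/4" using LL Lpos pos by simp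
  finally have "(1/2 + x) * (1/2 - x) = (cmod y)\<^sup>2"
    by (simp add: algebra_simps power2_eq_square)
  then obtain e where e: "is_unit_vec 2 e" and ke: "ketbra e = herm2 (1/2 + x) (1/2 - x) y"
    using herm2_pure_state[of "1/2 + x" "1/2 - x" y] by auto
  have "herm2 (1/2 + x) (1/2 - x) y = complex_of_real (1 / (2 * L)) \<cdot>\<^sub>m \<sigma> + (1/2) \<cdot>\<^sub>m 1\<^sub>m 2"
    unfolding Seq herm2_def x_def y_def using Lpos
    by (intro eq_matI) (auto simp: less_2_cases field_simps)
  thus ?thesis using e ke by metis
qed
section \<open>The tensor product \<open>\<complex>\<^sup>2 \<otimes> \<complex>\<^sup>2\<close>\<close>

lemma kron_carrier[simp]: "kron d2 d1 A B \<in> carrier_mat (d2 * d1) (d2 * d1)"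
  unfolding kron_def by auto

lemma kron_id_id: "kron 2 2 (1\<^sub>m 2) (1\<^sub>m 2) = 1\<^sub>m 4"
  unfolding kron_def by (rule eq_matI) (auto simp: less_4_cases)

lemma kron_id_add: "A \<in> carrier_mat 2 2 \<Longrightarrow> B \<in> carrier_mat 2 2 \<Longrightarrow>
    kron 2 2 (1\<^sub>m 2) (A + B) = kron 2 2 (1\<^sub>m 2) A + kron 2 2 (1\<^sub>m 2) B"
  unfolding kron_def by (rule eq_matI) (auto simp: less_4_cases)

lemma kron_id_minus: "A \<in> carrier_mat 2 2 \<Longrightarrow> B \<in> carrier_mat 2 2 \<Longrightarrow>
    kron 2 2 (1\<^sub>m 2) (A - B) = kron 2 2 (1\<^sub>m 2) A - kron 2 2 (1\<^sub>m 2) B"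
  unfolding kron_def by (rule eq_matI) (auto simp: less_4_cases)

lemma kron_id_smult: "A \<in> carrier_mat 2 2 \<Longrightarrow>
    kron 2 2 (1\<^sub>m 2) (c \<cdot>\<^sub>m A) = c \<cdot>\<^sub>m kron 2 2 (1\<^sub>m 2) A"
  unfolding kron_def by (rule eq_matI) (auto simp: less_4_cases)

text \<open>The isometry \<open>V\<^sub>e : g \<mapsto> g \<otimes> e\<close> from \<open>\<complex>\<^sup>2\<close> into \<open>\<complex>\<^sup>2 \<otimes> \<complex>\<^sup>2\<close>, and the local projector
  \<open>K\<^sub>e = I \<otimes> |e\<rangle>\<langle>e| = V\<^sub>e V\<^sub>e\<^sup>*\<close> onto its range.\<close>

definition tensor_iso :: "complex vec \<Rightarrow> complex mat" where
  "tensor_iso e = mat 4 2 (\<lambda>(i,j). if i div 2 = j then e$(i mod 2) else 0)"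

definition local_proj :: "complex vec \<Rightarrow> complex mat" where
  "local_proj e = kron 2 2 (1\<^sub>m 2) (ketbra e)"

lemma tensor_iso_carrier[simp]: "tensor_iso e \<in> carrier_mat 4 2"
  "dim_row (tensor_iso e) = 4" "dim_col (tensor_iso e) = 2"
  unfolding tensor_iso_def by auto

lemma local_proj_carrier[simp]: "local_proj e \<in> carrier_mat 4 4"
  "dim_row (local_proj e) = 4" "dim_col (local_proj e) = 4"
  unfolding local_proj_def using kron_carrier[of 2 2] by auto

lemma tensor_iso_vec: "f \<in> carrier_vec 2 \<Longrightarrow> tensor_iso e *\<^sub>v f = kron_vec 2 2 f e"
  unfolding tensor_iso_def kron_vec_def
  by (rule eq_vecI) (auto simp: less_4_cases scalar_prod_def sum_2)

lemma tensor_iso_isometry: "is_unit_vec 2 e \<Longrightarrow> mat_adjoint (tensor_iso e) * tensor_iso e = 1\<^sub>m 2"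
  unfolding unit_vec_2_iff tensor_iso_def
  by (rule eq_matI) (auto simp: less_2_cases scalar_prod_def sum_4 mult.commute)

lemma local_proj_factor: "is_unit_vec 2 e \<Longrightarrow> local_proj e = tensor_iso e * mat_adjoint (tensor_iso e)"
  unfolding local_proj_def kron_def ketbra_def tensor_iso_def unit_vec_2_iff
  by (rule eq_matI) (auto simp: less_4_cases scalar_prod_def sum_2)

lemma local_proj_herm:
  assumes u: "is_unit_vec 2 e"
  shows "mat_adjoint (local_proj e) = local_proj e"
proof -
  have "mat_adjoint (tensor_iso e * mat_adjoint (tensor_iso e))
      = mat_adjoint (mat_adjoint (tensor_iso e)) * mat_adjoint (tensor_iso e)"
    by (rule adj_mult[of _ 4 2 _ 4]) auto
  thus ?thesis unfolding local_proj_factor[OF u] by (simp only: adj_adj)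
qed

lemma local_proj_idem:
  assumes u: "is_unit_vec 2 e"
  shows "local_proj e * local_proj e = local_proj e"
proof -
  have "local_proj e * local_proj e
      = tensor_iso e * (mat_adjoint (tensor_iso e) * tensor_iso e) * mat_adjoint (tensor_iso e)"
    unfolding local_proj_factor[OF u] by (simp add: massoc)
  thus ?thesis using tensor_iso_isometry[OF u] local_proj_factor[OF u] by simp
qed

lemma local_proj_trace:
  assumes u: "is_unit_vec 2 e"
  shows "local_proj e $$ (0,0) + local_proj e $$ (1,1) = 1"
proof -
  have d: "dim_vec e = 2" and n: "cnj (e$0) * e$0 + cnj (e$1) * e$1 = 1"
    using u unfolding unit_vec_2_iff by auto
  have "local_proj e $$ (i,i) = e$i * cnj (e$i)" if "i < 2" for i
    using that d by (simp add: local_proj_def kron_def ketbra_def)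
  thus ?thesis using n by (simp add: mult.commute)
qed

lemma local_proj_perp_sum:
  assumes u: "is_unit_vec 2 e"
  shows "local_proj e + local_proj (perp e) = 1\<^sub>m 4"
proof -
  have "dim_vec e = 2" using u unfolding is_unit_vec_def by auto
  hence "ketbra e \<in> carrier_mat 2 2" "ketbra (perp e) \<in> carrier_mat 2 2"
    unfolding carrier_mat_def by simp_all
  hence "local_proj e + local_proj (perp e) = kron 2 2 (1\<^sub>m 2) (ketbra e + ketbra (perp e))"
    unfolding local_proj_def by (simp add: kron_id_add)
  also have "\<dots> = 1\<^sub>m 4" unfolding ketbra_onb_sum[OF u perp_unit[OF u] perp_orth] kron_id_id ..
  finally show ?thesis .
qed

lemma local_proj_perp:
  assumes "is_unit_vec 2 e"
  shows "local_proj (perp e) = 1\<^sub>m 4 - local_proj e"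
proof -
  have "local_proj (perp e) = (local_proj e + local_proj (perp e)) - local_proj e"
    by (intro eq_matI) auto
  thus ?thesis unfolding local_proj_perp_sum[OF assms] .
qed

lemma commute_affine:
  fixes A B C :: "complex mat"
  assumes "A \<in> carrier_mat n n" "B \<in> carrier_mat n n" "C \<in> carrier_mat n n"
    and "A * B = B * A" "A * C = C * A"
  shows "A * (c1 \<cdot>\<^sub>m (B - C) + c2 \<cdot>\<^sub>m 1\<^sub>m n) = (c1 \<cdot>\<^sub>m (B - C) + c2 \<cdot>\<^sub>m 1\<^sub>m n) * A"
proof -
  have X: "c1 \<cdot>\<^sub>m (B - C) \<in> carrier_mat n n" and Y: "c2 \<cdot>\<^sub>m 1\<^sub>m n \<in> carrier_mat n n"
    and BC: "B - C \<in> carrier_mat n n" using assms by auto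
  have "A * (B - C) = (B - C) * A"
    using assms by (simp add: mult_minus_distrib_mat[of _ n n] minus_mult_distrib_mat[of _ n n])
  hence "A * (c1 \<cdot>\<^sub>m (B - C)) = (c1 \<cdot>\<^sub>m (B - C)) * A"
    using mult_smult_distrib[of A n n "B - C" n c1] mult_smult_assoc_mat[of "B - C" n n A n c1] assms BC
    by simp
  moreover have "A * (c2 \<cdot>\<^sub>m 1\<^sub>m n) = (c2 \<cdot>\<^sub>m 1\<^sub>m n) * A"
    using mult_smult_distrib[of A n n "1\<^sub>m n" n c2] mult_smult_assoc_mat[of "1\<^sub>m n" n n A n c2] assms
    by simp
  ultimately show ?thesis
    using assms X Y by (simp add: mult_add_distrib_mat[of _ n n] add_mult_distrib_mat[of _ n n])
qed

lemma supp_idem_iff: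
  fixes P :: "complex mat"
  assumes P: "P \<in> carrier_mat n n" and i: "P * P = P"
  shows "x \<in> supp P \<longleftrightarrow> x \<in> carrier_vec n \<and> P *\<^sub>v x = x"
proof
  assume "x \<in> supp P"
  then obtain w where w: "w \<in> carrier_vec n" and x: "x = P *\<^sub>v w" using P unfolding supp_def by auto
  have "P *\<^sub>v x = (P * P) *\<^sub>v w" unfolding x using P w by (simp add: massoc_v)
  thus "x \<in> carrier_vec n \<and> P *\<^sub>v x = x" using i x P w by simp
next
  assume "x \<in> carrier_vec n \<and> P *\<^sub>v x = x"
  thus "x \<in> supp P" using P unfolding supp_def by (intro CollectI exI[of _ x]) auto
qed
section \<open>Testers built from a pair of complementary projectors\<close>

locale complementary_projectors =
  fixes P1 P2 :: "complex mat"
  assumes proj1: "orth_projector 4 P1" and proj2: "orth_projector 4 P2"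
    and sum_id: "P1 + P2 = 1\<^sub>m 4"
begin

lemma P1_carrier[simp]: "P1 \<in> carrier_mat 4 4" "dim_row P1 = 4" "dim_col P1 = 4"
  and P2_carrier[simp]: "P2 \<in> carrier_mat 4 4" "dim_row P2 = 4" "dim_col P2 = 4"
  and P1_idem[simp]: "P1 * P1 = P1" and P2_idem[simp]: "P2 * P2 = P2"
  and P1_herm[simp]: "mat_adjoint P1 = P1" and P2_herm[simp]: "mat_adjoint P2 = P2"
  using proj1 proj2 unfolding orth_projector_def by auto

lemma P2_eq: "P2 = 1\<^sub>m 4 - P1"
proof -
  have "P2 = (P1 + P2) - P1" by (intro eq_matI) auto
  thus ?thesis unfolding sum_id .
qed

lemma P1_P2[simp]: "P1 * P2 = 0\<^sub>m 4 4" and P2_P1[simp]: "P2 * P1 = 0\<^sub>m 4 4"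
  unfolding P2_eq by (simp_all add: mdist_minus_r mdist_minus_l)

lemma commute_P2: "A \<in> carrier_mat 4 4 \<Longrightarrow> P1 * A = A * P1 \<Longrightarrow> P2 * A = A * P2"
  unfolding P2_eq by (simp add: mdist_minus_r mdist_minus_l)

lemma P1_positive: "positive_op 4 P1" and P2_positive: "positive_op 4 P2"
  by (simp_all add: herm_idem_positive)

lemma half_tester: "tester 2 2 2 [(1/2) \<cdot>\<^sub>m P1, (1/2) \<cdot>\<^sub>m P2]"
  unfolding tester_def
proof (intro conjI)
  have h: "(1/2 :: complex) = complex_of_real (1/2)" by simp
  show "length [(1/2) \<cdot>\<^sub>m P1, (1/2) \<cdot>\<^sub>m P2] = 2" by simp
  show "\<forall>X\<in>set [(1/2) \<cdot>\<^sub>m P1, (1/2) \<cdot>\<^sub>m P2]. positive_op (2 * 2) X"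
    using positive_op_smult[OF P1_positive, of "1/2"] positive_op_smult[OF P2_positive, of "1/2"]
    unfolding h by simp
  have "density_op 2 ((1/2) \<cdot>\<^sub>m 1\<^sub>m 2)"
    using positive_op_smult[OF herm_idem_positive[of "1\<^sub>m 2" 2], of "1/2"]
    unfolding density_op_def h by (simp add: mtrace_def sum_2)
  moreover have "foldr (+) [(1/2) \<cdot>\<^sub>m P1, (1/2) \<cdot>\<^sub>m P2] (0\<^sub>m (2 * 2) (2 * 2))
      = (1/2) \<cdot>\<^sub>m (P1 + P2)"
    by (simp add: add_smult_distrib_left_mat[of _ 4 4])
  moreover have "(1/2) \<cdot>\<^sub>m (P1 + P2) = kron 2 2 (1\<^sub>m 2) ((1/2) \<cdot>\<^sub>m 1\<^sub>m 2)"
    unfolding sum_id kron_id_smult[OF one_carrier_mat] kron_id_id ..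
  ultimately show "\<exists>\<rho>. density_op 2 \<rho> \<and>
      foldr (+) [(1/2) \<cdot>\<^sub>m P1, (1/2) \<cdot>\<^sub>m P2] (0\<^sub>m (2 * 2) (2 * 2)) = kron 2 2 (1\<^sub>m 2) \<rho>"
    by metis
qed

subsection \<open>Commutation with a local projector gives a nontrivial decomposition\<close>

text \<open>If \<open>P\<^sub>1\<close> commutes with \<open>K\<^sub>e\<close>, then \<open>{P\<^sub>1 K\<^sub>e, P\<^sub>2 K\<^sub>e}\<close> is a tester: its elements are
  products of commuting projectors, and they sum to \<open>K\<^sub>e = I \<otimes> |e\<rangle>\<langle>e|\<close>.\<close>

lemma tester_of_commuting:
  assumes u: "is_unit_vec 2 e" and c: "P1 * local_proj e = local_proj e * P1"
  shows "tester 2 2 2 [P1 * local_proj e, P2 * local_proj e]"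
  unfolding tester_def
proof (intro conjI)
  let ?K = "local_proj e"
  have projector_product: "positive_op 4 (P * ?K)"
    if P: "P \<in> carrier_mat 4 4" "mat_adjoint P = P" "P * P = P" and cP: "P * ?K = ?K * P" for P
  proof (rule herm_idem_positive)
    show "P * ?K \<in> carrier_mat 4 4" using P by simp
    show "mat_adjoint (P * ?K) = P * ?K"
      using adj_mult[of P 4 4 ?K 4] P cP local_proj_herm[OF u] by simp
    have "P * ?K * (P * ?K) = P * (?K * P) * ?K" using P(1) by (simp add: massoc)
    also have "\<dots> = P * P * ?K * ?K" unfolding cP[symmetric] using P(1) by (simp add: massoc)
    finally show "P * ?K * (P * ?K) = P * ?K" using P local_proj_idem[OF u] by (simp add: massoc)
  qed
  show "length [P1 * ?K, P2 * ?K] = 2" by simp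
  show "\<forall>X\<in>set [P1 * ?K, P2 * ?K]. positive_op (2 * 2) X"
    using projector_product[of P1] projector_product[of P2] c commute_P2[of ?K] by simp
  have "foldr (+) [P1 * ?K, P2 * ?K] (0\<^sub>m (2 * 2) (2 * 2)) = (P1 + P2) * ?K"
    using right_add_zero_mat[OF mult_carrier_mat[OF P2_carrier(1) local_proj_carrier(1)]]
    by (simp add: mdist_add_l)
  also have "\<dots> = ?K" unfolding sum_id by simp
  also have "\<dots> = kron 2 2 (1\<^sub>m 2) (ketbra e)" unfolding local_proj_def ..
  finally show "\<exists>\<rho>. density_op 2 \<rho> \<and>
      foldr (+) [P1 * ?K, P2 * ?K] (0\<^sub>m (2 * 2) (2 * 2)) = kron 2 2 (1\<^sub>m 2) \<rho>"
    using ketbra_density[OF u] by blast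
qed

text \<open>Hence \<open>T = \<onehalf>{P\<^sub>1 K\<^sub>e, P\<^sub>2 K\<^sub>e} + \<onehalf>{P\<^sub>1 K\<^sub>e\<^sub>\<bottom>, P\<^sub>2 K\<^sub>e\<^sub>\<bottom>}\<close> is a proper convex decomposition,
  the two testers being different because \<open>K\<^sub>e \<noteq> K\<^sub>e\<^sub>\<bottom>\<close>.\<close>

lemma not_extremal_of_commuting:
  assumes u: "is_unit_vec 2 e" and c: "P1 * local_proj e = local_proj e * P1"
  shows "\<not> extremal_tester 2 2 2 [(1/2) \<cdot>\<^sub>m P1, (1/2) \<cdot>\<^sub>m P2]"
proof -
  define K where "K = local_proj e"
  define K' where "K' = local_proj (perp e)"
  have Kc[simp]: "K \<in> carrier_mat 4 4" "K' \<in> carrier_mat 4 4"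
    "dim_row K = 4" "dim_col K = 4" "dim_row K' = 4" "dim_col K' = 4"
    unfolding K_def K'_def by auto
  have K'_eq: "K' = 1\<^sub>m 4 - K" unfolding K'_def K_def using local_proj_perp[OF u] .
  have c': "P1 * K' = K' * P1" unfolding K'_eq
    using c unfolding K_def by (simp add: mdist_minus_r mdist_minus_l)
  define X where "X = [P1 * K, P2 * K]"
  define Y where "Y = [P1 * K', P2 * K']"
  have tX: "tester 2 2 2 X" unfolding X_def K_def using tester_of_commuting[OF u c] .
  have tY: "tester 2 2 2 Y"
    unfolding Y_def K'_def using tester_of_commuting[OF perp_unit[OF u]] c' unfolding K'_def by blast
  have "X \<noteq> Y"
  proof
    assume "X = Y"
    hence eq: "P1 * K + P2 * K = P1 * K' + P2 * K'" unfolding X_def Y_def by simp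
    have "K = (P1 + P2) * K" unfolding sum_id by simp
    also have "\<dots> = P1 * K' + P2 * K'" using eq by (simp add: mdist_add_l)
    also have "\<dots> = (P1 + P2) * K'" by (simp add: mdist_add_l)
    finally have "K = K'" unfolding sum_id by simp
    hence "K = K * K'" using local_proj_idem[OF u, folded K_def] by simp
    also have "\<dots> = K - K * K" unfolding K'_eq by (simp add: mdist_minus_r)
    also have "\<dots> = 0\<^sub>m 4 4" using local_proj_idem[OF u, folded K_def] by (intro eq_matI) auto
    finally have "K = 0\<^sub>m 4 4" .
    thus False using local_proj_trace[OF u, folded K_def] by simp
  qed
  have halves: "(1/2) \<cdot>\<^sub>m (P * K) + (1/2) \<cdot>\<^sub>m (P * K') = (1/2) \<cdot>\<^sub>m P"
    if "P \<in> carrier_mat 4 4" for P :: "complex mat"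
  proof -
    have "P * K + P * K' = P" using that local_proj_perp_sum[OF u, folded K_def K'_def]
      by (simp add: mdist_add_r[symmetric])
    thus ?thesis using that by (simp add: add_smult_distrib_left_mat[symmetric, of _ 4 4])
  qed
  have "[(1/2) \<cdot>\<^sub>m P1, (1/2) \<cdot>\<^sub>m P2] = conv_comb (1/2) X Y"
    unfolding conv_comb_def X_def Y_def using halves[of P1] halves[of P2] by simp
  moreover have "(0::real) < 1/2" "(1/2::real) < 1" by simp_all
  ultimately show ?thesis unfolding extremal_tester_def using tX tY \<open>X \<noteq> Y\<close> by blast
qed

end
lemma density_op_2_facts:
  assumes "density_op 2 \<rho>"
  shows "\<rho> \<in> carrier_mat 2 2" "mat_adjoint \<rho> = \<rho>" "\<rho> $$ (0,0) + \<rho> $$ (1,1) = 1"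
  using assms unfolding density_op_def positive_op_def mtrace_def by (auto simp: sum_2)

lemma list_length_2: "length xs = 2 \<Longrightarrow> xs = [xs!0, xs!1]"
  by (cases xs; cases "tl xs") auto

context complementary_projectors
begin

subsection \<open>A nontrivial decomposition forces commutation with a local projector\<close>

lemma block_diagonal_parts:
  fixes X1 X2 :: "complex mat"
  assumes X1: "X1 \<in> carrier_mat 4 4" and X2: "X2 \<in> carrier_mat 4 4"
    and h1: "mat_adjoint X1 = X1" and h2: "mat_adjoint X2 = X2"
    and z1: "X1 * P2 = 0\<^sub>m 4 4" and z2: "X2 * P1 = 0\<^sub>m 4 4"
  shows "P1 * (X1 + X2) = (X1 + X2) * P1" "X1 = P1 * (X1 + X2)" "X2 = P2 * (X1 + X2)"
proof -
  have d1: "dim_row X1 = 4" "dim_col X1 = 4" and d2: "dim_row X2 = 4" "dim_col X2 = 4"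
    using X1 X2 by auto
  have "mat_adjoint (X2 * P1) = P1 * X2" using adj_mult[OF X2 P1_carrier(1)] h2 by simp
  hence "P1 * X2 = 0\<^sub>m 4 4" using z2 by simp
  moreover have X1P1: "X1 * P1 = X1"
  proof -
    have "X1 = X1 * (P1 + P2)" unfolding sum_id using d1 by simp
    also have "\<dots> = X1 * P1 + X1 * P2" using d1 by (simp add: mdist_add_r)
    finally show ?thesis using z1 X1 by simp
  qed
  moreover have "P1 * X1 = X1"
    using adj_mult[OF X1 P1_carrier(1)] X1P1 h1 by simp
  ultimately have e1: "P1 * (X1 + X2) = X1" and e2: "(X1 + X2) * P1 = X1"
    using d1 d2 z2 X1 by (simp_all add: mdist_add_r mdist_add_l)
  show "P1 * (X1 + X2) = (X1 + X2) * P1" "X1 = P1 * (X1 + X2)" using e1 e2 by simp_all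
  have "P2 * (X1 + X2) = (X1 + X2) - P1 * (X1 + X2)"
    unfolding P2_eq using d1 d2 by (simp add: mdist_minus_l)
  also have "\<dots> = X2" unfolding e1 using d1 d2 by (intro eq_matI) auto
  finally show "X2 = P2 * (X1 + X2)" by simp
qed

text \<open>Each tester \<open>X\<close> that enters a decomposition \<open>T = s X + s' Y\<close> with \<open>s > 0\<close> is supported
  block-diagonally: \<open>X\<^sub>1\<close> vanishes on \<open>Supp P\<^sub>2 = ker P\<^sub>1\<close> and \<open>X\<^sub>2\<close> on \<open>Supp P\<^sub>1\<close>, so
  \<open>X\<^sub>i = P\<^sub>i (I \<otimes> \<rho>)\<close> and \<open>P\<^sub>1\<close> commutes with \<open>I \<otimes> \<rho>\<close>.\<close>

lemma component_of_decomposition: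
  fixes X1 X2 Y1 Y2 :: "complex mat"
  assumes X: "tester 2 2 2 [X1, X2]" and Y1: "positive_op 4 Y1" and Y2: "positive_op 4 Y2"
    and s: "0 < s" and s': "0 \<le> s'"
    and eq1: "(1/2) \<cdot>\<^sub>m P1 = complex_of_real s \<cdot>\<^sub>m X1 + complex_of_real s' \<cdot>\<^sub>m Y1"
    and eq2: "(1/2) \<cdot>\<^sub>m P2 = complex_of_real s \<cdot>\<^sub>m X2 + complex_of_real s' \<cdot>\<^sub>m Y2"
  shows "\<exists>\<rho>. density_op 2 \<rho> \<and> X1 = P1 * kron 2 2 (1\<^sub>m 2) \<rho> \<and> X2 = P2 * kron 2 2 (1\<^sub>m 2) \<rho> \<and>
    P1 * kron 2 2 (1\<^sub>m 2) \<rho> = kron 2 2 (1\<^sub>m 2) \<rho> * P1"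
proof -
  obtain \<rho> where pX1: "positive_op 4 X1" and pX2: "positive_op 4 X2" and \<rho>: "density_op 2 \<rho>"
    and fold: "foldr (+) [X1, X2] (0\<^sub>m 4 4) = kron 2 2 (1\<^sub>m 2) \<rho>"
    using X unfolding tester_def by auto
  have X1c: "X1 \<in> carrier_mat 4 4" and X2c: "X2 \<in> carrier_mat 4 4"
    and h1: "mat_adjoint X1 = X1" and h2: "mat_adjoint X2 = X2"
    using pX1 pX2 unfolding positive_op_def by auto
  have M: "X1 + X2 = kron 2 2 (1\<^sub>m 2) \<rho>" using fold X2c by simp
  have half_kernel: "(1/2) \<cdot>\<^sub>m P *\<^sub>v v = 0\<^sub>v 4" if "P \<in> carrier_mat 4 4" "P *\<^sub>v v = 0\<^sub>v 4"
    "v \<in> carrier_vec 4" for P :: "complex mat" and v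
  proof -
    have "(1/2) \<cdot>\<^sub>m P *\<^sub>v v = (1/2) \<cdot>\<^sub>v (P *\<^sub>v v)" using that by (simp add: smult_mat_vec)
    thus ?thesis using that by (intro eq_vecI) auto
  qed
  have "X1 * P2 = 0\<^sub>m 4 4"
    by (rule mult_zero_by_kernel_inclusion[OF X1c P2_carrier(1) P1_P2 P1_carrier(1)])
      (rule kernel_of_positive_combination[OF pX1 Y1 s s' eq1], auto intro: half_kernel)
  moreover have "X2 * P1 = 0\<^sub>m 4 4"
    by (rule mult_zero_by_kernel_inclusion[OF X2c P1_carrier(1) P2_P1 P2_carrier(1)])
      (rule kernel_of_positive_combination[OF pX2 Y2 s s' eq2], auto intro: half_kernel)
  ultimately show ?thesis
    using block_diagonal_parts[OF X1c X2c h1 h2] \<rho> unfolding M by blast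
qed

text \<open>If \<open>T = t X + (1 - t) Y\<close> with \<open>X \<noteq> Y\<close>, the two reduced states \<open>\<rho>\<^sub>X \<noteq> \<rho>\<^sub>Y\<close> give a nonzero
  traceless Hermitian \<open>\<sigma> = \<rho>\<^sub>X - \<rho>\<^sub>Y\<close>; then \<open>|e\<rangle>\<langle>e| = c\<^sub>1 \<sigma> + c\<^sub>2 I\<close> for a unit \<open>e\<close>, and \<open>P\<^sub>1\<close>
  commutes with \<open>I \<otimes> |e\<rangle>\<langle>e|\<close> because it commutes with \<open>I \<otimes> \<rho>\<^sub>X\<close> and \<open>I \<otimes> \<rho>\<^sub>Y\<close>.\<close>

lemma commuting_of_not_extremal:
  assumes "\<not> extremal_tester 2 2 2 [(1/2) \<cdot>\<^sub>m P1, (1/2) \<cdot>\<^sub>m P2]"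
  shows "\<exists>e. is_unit_vec 2 e \<and> P1 * local_proj e = local_proj e * P1"
proof -
  obtain X Y t where tX: "tester 2 2 2 X" and tY: "tester 2 2 2 Y" and XY: "X \<noteq> Y"
    and t: "0 < t" "t < 1" and T: "[(1/2) \<cdot>\<^sub>m P1, (1/2) \<cdot>\<^sub>m P2] = conv_comb t X Y"
    using assms half_tester unfolding extremal_tester_def by blast
  obtain X1 X2 Y1 Y2 where X: "X = [X1, X2]" and Y: "Y = [Y1, Y2]"
    using tX tY list_length_2 unfolding tester_def by metis
  have pos: "positive_op 4 X1" "positive_op 4 X2" "positive_op 4 Y1" "positive_op 4 Y2"
    using tX tY unfolding X Y tester_def by auto
  hence car: "X1 \<in> carrier_mat 4 4" "X2 \<in> carrier_mat 4 4" "Y1 \<in> carrier_mat 4 4"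
    "Y2 \<in> carrier_mat 4 4" unfolding positive_op_def by auto
  define a where "a = complex_of_real t"
  define b where "b = complex_of_real (1 - t)"
  have eq1: "(1/2) \<cdot>\<^sub>m P1 = a \<cdot>\<^sub>m X1 + b \<cdot>\<^sub>m Y1" and eq2: "(1/2) \<cdot>\<^sub>m P2 = a \<cdot>\<^sub>m X2 + b \<cdot>\<^sub>m Y2"
    using T unfolding X Y conv_comb_def a_def b_def by auto
  have eq1': "(1/2) \<cdot>\<^sub>m P1 = b \<cdot>\<^sub>m Y1 + a \<cdot>\<^sub>m X1" and eq2': "(1/2) \<cdot>\<^sub>m P2 = b \<cdot>\<^sub>m Y2 + a \<cdot>\<^sub>m X2"
    unfolding eq1 eq2 using car by (auto intro: comm_add_mat)
  obtain \<rho>x where \<rho>x: "density_op 2 \<rho>x" and X12: "X1 = P1 * kron 2 2 (1\<^sub>m 2) \<rho>x"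
    "X2 = P2 * kron 2 2 (1\<^sub>m 2) \<rho>x" and cx: "P1 * kron 2 2 (1\<^sub>m 2) \<rho>x = kron 2 2 (1\<^sub>m 2) \<rho>x * P1"
    using component_of_decomposition[of X1 X2 Y1 Y2 t "1 - t"] tX pos t eq1 eq2
    unfolding X a_def b_def by auto
  obtain \<rho>y where \<rho>y: "density_op 2 \<rho>y" and Y12: "Y1 = P1 * kron 2 2 (1\<^sub>m 2) \<rho>y"
    "Y2 = P2 * kron 2 2 (1\<^sub>m 2) \<rho>y" and cy: "P1 * kron 2 2 (1\<^sub>m 2) \<rho>y = kron 2 2 (1\<^sub>m 2) \<rho>y * P1"
    using component_of_decomposition[of Y1 Y2 X1 X2 "1 - t" t] tY pos t eq1' eq2'
    unfolding Y a_def b_def by auto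
  note fx = density_op_2_facts[OF \<rho>x] and fy = density_op_2_facts[OF \<rho>y]
  define \<sigma> where "\<sigma> = \<rho>x - \<rho>y"
  have \<sigma>: "\<sigma> \<in> carrier_mat 2 2" "mat_adjoint \<sigma> = \<sigma>" "\<sigma> $$ (0,0) + \<sigma> $$ (1,1) = 0"
    unfolding \<sigma>_def using fx fy adj_minus[OF fx(1) fy(1)]
    by (auto simp: algebra_simps)
  have "\<sigma> \<noteq> 0\<^sub>m 2 2"
  proof
    assume "\<sigma> = 0\<^sub>m 2 2"
    hence "\<rho>x $$ (i,j) = \<rho>y $$ (i,j)" if "i < 2" "j < 2" for i j
      using that fx(1) fy(1) unfolding \<sigma>_def by (metis index_minus_mat(1) index_zero_mat(1)
        carrier_matD right_minus_eq)
    hence "\<rho>x = \<rho>y" using fx(1) fy(1) by (intro eq_matI) auto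
    thus False using XY X12 Y12 unfolding X Y by simp
  qed
  then obtain e c1 c2 where e: "is_unit_vec 2 e" and ke: "ketbra e = c1 \<cdot>\<^sub>m \<sigma> + c2 \<cdot>\<^sub>m 1\<^sub>m 2"
    using traceless_hermitian_to_pure_state \<sigma> by blast
  have "local_proj e = kron 2 2 (1\<^sub>m 2) (c1 \<cdot>\<^sub>m \<sigma>) + kron 2 2 (1\<^sub>m 2) (c2 \<cdot>\<^sub>m 1\<^sub>m 2)"
    unfolding local_proj_def ke using \<sigma>(1) by (intro kron_id_add) auto
  also have "\<dots> = c1 \<cdot>\<^sub>m kron 2 2 (1\<^sub>m 2) \<sigma> + c2 \<cdot>\<^sub>m 1\<^sub>m 4"
    unfolding kron_id_smult[OF \<sigma>(1)] kron_id_smult[OF one_carrier_mat] kron_id_id ..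
  also have "kron 2 2 (1\<^sub>m 2) \<sigma> = kron 2 2 (1\<^sub>m 2) \<rho>x - kron 2 2 (1\<^sub>m 2) \<rho>y"
    unfolding \<sigma>_def by (rule kron_id_minus[OF fx(1) fy(1)])
  finally have "local_proj e
      = c1 \<cdot>\<^sub>m (kron 2 2 (1\<^sub>m 2) \<rho>x - kron 2 2 (1\<^sub>m 2) \<rho>y) + c2 \<cdot>\<^sub>m 1\<^sub>m 4" .
  moreover have "kron 2 2 (1\<^sub>m 2) \<rho>x \<in> carrier_mat 4 4" "kron 2 2 (1\<^sub>m 2) \<rho>y \<in> carrier_mat 4 4"
    using kron_carrier[of 2 2] by auto
  ultimately have "P1 * local_proj e = local_proj e * P1"
    using commute_affine[OF P1_carrier(1) _ _ cx cy] by simp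
  thus ?thesis using e by blast
qed

end
subsection \<open>Commutation with a local projector versus conditions (a) and (b)\<close>

definition local_form :: "complex mat \<Rightarrow> bool" where
  "local_form P \<longleftrightarrow> (\<exists>v. is_unit_vec 2 v \<and> P = kron 2 2 (1\<^sub>m 2) (ketbra v))"

definition product_split :: "complex mat \<Rightarrow> complex mat \<Rightarrow> bool" where
  "product_split P1 P2 \<longleftrightarrow> (\<exists>f e fp. is_unit_vec 2 f \<and> is_unit_vec 2 e \<and> is_unit_vec 2 fp \<and>
     cinner f fp = 0 \<and> kron_vec 2 2 f e \<in> supp P1 \<and> kron_vec 2 2 fp e \<in> supp P2)"

context complementary_projectors
begin

lemma supp_P1_iff: "x \<in> supp P1 \<longleftrightarrow> x \<in> carrier_vec 4 \<and> P1 *\<^sub>v x = x"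
  and supp_P2_iff: "x \<in> supp P2 \<longleftrightarrow> x \<in> carrier_vec 4 \<and> P2 *\<^sub>v x = x"
  by (simp_all add: supp_idem_iff)

lemma supp_P2_killed:
  assumes "x \<in> supp P2"
  shows "P1 *\<^sub>v x = 0\<^sub>v 4"
proof -
  have x: "x \<in> carrier_vec 4" "P2 *\<^sub>v x = x" using assms unfolding supp_P2_iff by auto
  have "P1 *\<^sub>v x = P1 *\<^sub>v (P2 *\<^sub>v x)" using x by simp
  also have "\<dots> = (P1 * P2) *\<^sub>v x" by (rule massoc_v[symmetric]) (use x in auto)
  also have "\<dots> = 0\<^sub>v 4" using x by (intro eq_vecI) auto
  finally show ?thesis .
qed

text \<open>(b) implies commutation with \<open>K\<^sub>e\<close>: on the range of \<open>V\<^sub>e\<close>, \<open>P\<^sub>1\<close> acts as \<open>|f\<rangle>\<langle>f|\<close>, i.e.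
  \<open>P\<^sub>1 V\<^sub>e = V\<^sub>e |f\<rangle>\<langle>f|\<close>; hence \<open>P\<^sub>1 K\<^sub>e = V\<^sub>e |f\<rangle>\<langle>f| V\<^sub>e\<^sup>*\<close> is Hermitian, which means \<open>P\<^sub>1 K\<^sub>e = K\<^sub>e P\<^sub>1\<close>.\<close>

lemma commuting_of_product_split:
  assumes "product_split P1 P2"
  shows "\<exists>e. is_unit_vec 2 e \<and> P1 * local_proj e = local_proj e * P1"
proof -
  obtain f e fp where f: "is_unit_vec 2 f" and e: "is_unit_vec 2 e" and p: "is_unit_vec 2 fp"
    and o: "cinner f fp = 0" and s1: "kron_vec 2 2 f e \<in> supp P1" and s2: "kron_vec 2 2 fp e \<in> supp P2"
    using assms unfolding product_split_def by blast
  define V where "V = tensor_iso e"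
  define F where "F = ketbra f"
  have fc: "f \<in> carrier_vec 2" and pc: "fp \<in> carrier_vec 2" using f p unfolding is_unit_vec_def by auto
  have Vc: "V \<in> carrier_mat 4 2" and Fc: "F \<in> carrier_mat 2 2"
    unfolding V_def F_def using fc by auto
  have x1: "P1 *\<^sub>v (V *\<^sub>v f) = V *\<^sub>v f"
    unfolding V_def tensor_iso_vec[OF fc] using s1 supp_P1_iff by blast
  have x2: "P1 *\<^sub>v (V *\<^sub>v fp) = 0\<^sub>v 4"
    unfolding V_def tensor_iso_vec[OF pc] using supp_P2_killed[OF s2] .
  have PV: "P1 * V = V * F"
  proof (rule mat_eq_by_vec[of _ 4 2])
    fix g :: "complex vec" assume g: "g \<in> carrier_vec 2"
    have "(P1 * V) *\<^sub>v g = P1 *\<^sub>v (V *\<^sub>v (cinner f g \<cdot>\<^sub>v f + cinner fp g \<cdot>\<^sub>v fp))"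
      using onb_expansion[OF f p o g] Vc g by (simp add: massoc_v)
    also have "\<dots> = cinner f g \<cdot>\<^sub>v (P1 *\<^sub>v (V *\<^sub>v f)) + cinner fp g \<cdot>\<^sub>v (P1 *\<^sub>v (V *\<^sub>v fp))"
      using Vc fc pc by (simp add: mult_add_distrib_mat_vec[of _ 4 2] mult_mat_vec[of _ 4 2]
          mult_add_distrib_mat_vec[of _ 4 4] mult_mat_vec[of _ 4 4])
    also have "\<dots> = V *\<^sub>v (cinner f g \<cdot>\<^sub>v f)"
      unfolding x1 x2 using Vc fc by (intro eq_vecI) (auto simp: mult_mat_vec[of _ 4 2])
    also have "\<dots> = V *\<^sub>v (F *\<^sub>v g)" using ketbra_vec[of f g] fc g unfolding F_def by simp
    also have "\<dots> = (V * F) *\<^sub>v g" using Vc Fc g by (simp add: massoc_v)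
    finally show "(P1 * V) *\<^sub>v g = (V * F) *\<^sub>v g" .
  qed (use Vc Fc in auto)
  have "P1 * local_proj e = V * F * mat_adjoint V"
    unfolding local_proj_factor[OF e, folded V_def] using Vc PV by (simp add: massoc[symmetric])
  moreover have "mat_adjoint (V * F * mat_adjoint V) = V * F * mat_adjoint V"
    using adj_mult[OF mult_carrier_mat[OF Vc Fc], of "mat_adjoint V" 4] adj_mult[OF Vc Fc] Vc Fc
    unfolding F_def ketbra_adj by (simp add: massoc)
  moreover have "mat_adjoint (P1 * local_proj e) = local_proj e * P1"
    using adj_mult[OF P1_carrier(1) local_proj_carrier(1)] local_proj_herm[OF e] by simp
  ultimately show ?thesis using e by auto
qed

lemma compression_of_commuting:
  assumes u: "is_unit_vec 2 u" and c: "P1 * local_proj u = local_proj u * P1"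
  defines "Q \<equiv> mat_adjoint (tensor_iso u) * P1 * tensor_iso u"
  shows "P1 * tensor_iso u = tensor_iso u * Q" and "Q \<in> carrier_mat 2 2"
    and "mat_adjoint Q = Q" and "Q * Q = Q"
proof -
  define V where "V = tensor_iso u"
  have Vc: "V \<in> carrier_mat 4 2" and aVc: "mat_adjoint V \<in> carrier_mat 2 4" unfolding V_def by auto
  have Vd[simp]: "dim_row V = 4" "dim_col V = 2" unfolding V_def by auto
  have K: "local_proj u = V * mat_adjoint V" unfolding V_def using local_proj_factor[OF u] .
  have KV: "local_proj u * V = V"
    unfolding K using tensor_iso_isometry[OF u, folded V_def] by (simp add: massoc)
  have PV: "P1 * V = V * Q"
  proof -
    have "P1 * V = P1 * (local_proj u * V)" using KV by simp
    also have "\<dots> = local_proj u * P1 * V" using c by (simp add: massoc[symmetric])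
    also have "\<dots> = V * Q" unfolding K Q_def V_def by (simp add: massoc)
    finally show ?thesis .
  qed
  thus "P1 * tensor_iso u = tensor_iso u * Q" unfolding V_def .
  show Qc: "Q \<in> carrier_mat 2 2" unfolding Q_def using mult_carrier_mat[OF mult_carrier_mat[OF aVc P1_carrier(1)] Vc]
    unfolding V_def .
  have "Q = mat_adjoint V * (P1 * V)" unfolding Q_def V_def by (rule massoc) simp_all
  hence "mat_adjoint Q = mat_adjoint (P1 * V) * V"
    using adj_mult[OF aVc mult_carrier_mat[OF P1_carrier(1) Vc]] by simp
  also have "\<dots> = Q" unfolding Q_def V_def using adj_mult[OF P1_carrier(1) Vc[unfolded V_def]] by simp
  finally show "mat_adjoint Q = Q" .
  have "Q * Q = mat_adjoint V * P1 * (V * Q)" unfolding Q_def V_def by (simp add: massoc)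
  also have "\<dots> = mat_adjoint V * (P1 * P1) * V"
    unfolding PV[symmetric] using massoc[of P1 P1 V] by (simp add: massoc)
  also have "\<dots> = Q" unfolding Q_def V_def by simp
  finally show "Q * Q = Q" .
qed

text \<open>A rank-one compression \<open>P\<^sub>1 V\<^sub>u = V\<^sub>u |f\<rangle>\<langle>f|\<close> yields (b) with \<open>e = u\<close>: \<open>f \<otimes> u\<close> is fixed by
  \<open>P\<^sub>1\<close> and \<open>f\<^sub>\<bottom> \<otimes> u\<close> is killed by \<open>P\<^sub>1\<close>, hence fixed by \<open>P\<^sub>2 = I - P\<^sub>1\<close>.\<close>

lemma product_split_of_rank_one_compression:
  assumes u: "is_unit_vec 2 u" and f: "is_unit_vec 2 f" and PV: "P1 * tensor_iso u = tensor_iso u * ketbra f"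
  shows "product_split P1 P2"
proof -
  define V where "V = tensor_iso u"
  define p where "p = perp f"
  have Vc: "V \<in> carrier_mat 4 2" unfolding V_def by simp
  have fc: "f \<in> carrier_vec 2" and ff: "cinner f f = 1" using f unfolding is_unit_vec_def by auto
  have pc: "p \<in> carrier_vec 2" and pu: "is_unit_vec 2 p" and o: "cinner f p = 0"
    unfolding p_def using perp_unit[OF f] perp_orth by auto
  have act: "P1 *\<^sub>v (V *\<^sub>v g) = cinner f g \<cdot>\<^sub>v (V *\<^sub>v f)" if g: "g \<in> carrier_vec 2" for g
  proof -
    have "P1 *\<^sub>v (V *\<^sub>v g) = (V * ketbra f) *\<^sub>v g"
      using g Vc PV unfolding V_def by (simp add: massoc_v[symmetric])
    also have "\<dots> = V *\<^sub>v (cinner f g \<cdot>\<^sub>v f)"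
      using g Vc fc by (simp add: massoc_v ketbra_vec)
    finally show ?thesis using Vc fc by (simp add: mult_mat_vec)
  qed
  have Vf: "V *\<^sub>v f \<in> carrier_vec 4" and Vp: "V *\<^sub>v p \<in> carrier_vec 4"
    using Vc fc pc by auto
  have "P1 *\<^sub>v (V *\<^sub>v f) = V *\<^sub>v f" using act[OF fc] ff Vf by simp
  hence s1: "kron_vec 2 2 f u \<in> supp P1"
    using Vf unfolding supp_P1_iff V_def tensor_iso_vec[OF fc] by simp
  have x2: "P1 *\<^sub>v (V *\<^sub>v p) = 0\<^sub>v 4" using act[OF pc] o Vc by (intro eq_vecI) auto
  have "P2 *\<^sub>v (V *\<^sub>v p) = 1\<^sub>m 4 *\<^sub>v (V *\<^sub>v p) - P1 *\<^sub>v (V *\<^sub>v p)" unfolding P2_eq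
    by (rule minus_mult_distrib_mat_vec[OF one_carrier_mat P1_carrier(1) Vp])
  hence "P2 *\<^sub>v (V *\<^sub>v p) = V *\<^sub>v p" unfolding x2 using Vp by simp
  hence s2: "kron_vec 2 2 p u \<in> supp P2"
    using Vp unfolding supp_P2_iff V_def tensor_iso_vec[OF pc] by simp
  show ?thesis unfolding product_split_def using f u pu o s1 s2 by blast
qed

text \<open>Writing \<open>P\<^sub>1 = V Q V\<^sup>* + W R W\<^sup>*\<close>
  with \<open>V = V\<^sub>e\<close>, \<open>W = V\<^sub>e\<^sub>\<bottom>\<close> and \<open>2 \<times> 2\<close> projectors \<open>Q, R\<close>: a rank-one \<open>Q\<close> or \<open>R\<close> gives (b);
  \<open>(Q, R) = (I, 0)\<close> or \<open>(0, I)\<close> gives (a); and \<open>(0, 0)\<close>, \<open>(I, I)\<close> would make \<open>P\<^sub>1\<close> or \<open>P\<^sub>2\<close> vanish.\<close>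

lemma conditions_of_commuting:
  assumes e: "is_unit_vec 2 e" and c: "P1 * local_proj e = local_proj e * P1"
    and r1: "vec_space.rank 4 P1 = 2" and r2: "vec_space.rank 4 P2 = 2"
  shows "local_form P1 \<or> product_split P1 P2"
proof -
  define ep where "ep = perp e"
  have ep: "is_unit_vec 2 ep" unfolding ep_def using perp_unit[OF e] .
  have c': "P1 * local_proj ep = local_proj ep * P1"
    unfolding ep_def local_proj_perp[OF e] using c by (simp add: mdist_minus_r mdist_minus_l)
  define V where "V = tensor_iso e"
  define W where "W = tensor_iso ep"
  define Q where "Q = mat_adjoint V * P1 * V"
  define R where "R = mat_adjoint W * P1 * W"
  note cQ = compression_of_commuting[OF e c, folded V_def, folded Q_def]
  note cR = compression_of_commuting[OF ep c', folded W_def, folded R_def]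
  have Vc: "V \<in> carrier_mat 4 2" and Wc: "W \<in> carrier_mat 4 2" unfolding V_def W_def by auto
  have KK: "local_proj e + local_proj ep = 1\<^sub>m 4" unfolding ep_def using local_proj_perp_sum[OF e] .
  have "P1 = P1 * (local_proj e + local_proj ep)" unfolding KK by simp
  also have "\<dots> = (P1 * V) * mat_adjoint V + (P1 * W) * mat_adjoint W"
    unfolding local_proj_factor[OF e, folded V_def] local_proj_factor[OF ep, folded W_def]
    using Vc Wc by (simp add: mdist_add_r massoc)
  finally have P1_eq: "P1 = V * Q * mat_adjoint V + W * R * mat_adjoint W"
    unfolding cQ(1) cR(1) .
  have V0: "V * 0\<^sub>m 2 2 * mat_adjoint V = 0\<^sub>m 4 4" and W0: "W * 0\<^sub>m 2 2 * mat_adjoint W = 0\<^sub>m 4 4"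
    using Vc Wc by auto
  have V1: "V * 1\<^sub>m 2 * mat_adjoint V = local_proj e" and W1: "W * 1\<^sub>m 2 * mat_adjoint W = local_proj ep"
    unfolding local_proj_factor[OF e, folded V_def] local_proj_factor[OF ep, folded W_def]
    using Vc Wc by auto
  have rank0: "vec_space.rank 4 (0\<^sub>m 4 4 :: complex mat) = 0" by (rule vec_space.rank_0I)
  consider (Q_rank_one) f where "is_unit_vec 2 f" "Q = ketbra f"
    | (R_rank_one) f where "is_unit_vec 2 f" "R = ketbra f"
    | (zero) "Q = 0\<^sub>m 2 2" "R = 0\<^sub>m 2 2" | (local_perp) "Q = 0\<^sub>m 2 2" "R = 1\<^sub>m 2"
    | (local) "Q = 1\<^sub>m 2" "R = 0\<^sub>m 2 2" | (identity) "Q = 1\<^sub>m 2" "R = 1\<^sub>m 2"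
    using projector_2_cases[OF cQ(2-4)] projector_2_cases[OF cR(2-4)] by blast
  thus ?thesis
  proof cases
    case (Q_rank_one f)
    thus ?thesis using product_split_of_rank_one_compression[OF e] cQ(1) unfolding V_def by auto
  next
    case (R_rank_one f)
    thus ?thesis using product_split_of_rank_one_compression[OF ep] cR(1) unfolding W_def by auto
  next
    case zero
    hence "P1 = 0\<^sub>m 4 4" using P1_eq V0 W0 by simp
    thus ?thesis using r1 rank0 by simp
  next
    case local_perp
    hence "P1 = local_proj ep" using P1_eq V0 W1 local_proj_carrier(1)[of ep] by simp
    thus ?thesis using ep unfolding local_proj_def local_form_def by blast
  next
    case local
    hence "P1 = local_proj e" using P1_eq W0 V1 local_proj_carrier(1)[of e] by simp
    thus ?thesis using e unfolding local_proj_def local_form_def by blast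
  next
    case identity
    hence "P1 = 1\<^sub>m 4" using P1_eq V1 W1 KK by simp
    hence "P2 = 0\<^sub>m 4 4" unfolding P2_eq by (intro eq_matI) auto
    thus ?thesis using r2 rank0 by simp
  qed
qed

end
context complementary_projectors
begin

lemma not_extremal_iff_commuting:
  "\<not> extremal_tester 2 2 2 [(1/2) \<cdot>\<^sub>m P1, (1/2) \<cdot>\<^sub>m P2] \<longleftrightarrow>
    (\<exists>e. is_unit_vec 2 e \<and> P1 * local_proj e = local_proj e * P1)"
  using commuting_of_not_extremal not_extremal_of_commuting by blast

lemma commuting_iff_conditions:
  assumes "vec_space.rank 4 P1 = 2" and "vec_space.rank 4 P2 = 2"
  shows "(\<exists>e. is_unit_vec 2 e \<and> P1 * local_proj e = local_proj e * P1) \<longleftrightarrow>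
    local_form P1 \<or> product_split P1 P2"
proof
  assume "\<exists>e. is_unit_vec 2 e \<and> P1 * local_proj e = local_proj e * P1"
  thus "local_form P1 \<or> product_split P1 P2" using conditions_of_commuting assms by blast
next
  assume "local_form P1 \<or> product_split P1 P2"
  thus "\<exists>e. is_unit_vec 2 e \<and> P1 * local_proj e = local_proj e * P1"
    using commuting_of_product_split unfolding local_form_def local_proj_def by blast
qed

end


theorem mainTheorem12:
  fixes P1 P2 :: "complex mat"
  assumes "orth_projector 4 P1" and "orth_projector 4 P2"
    and "vec_space.rank 4 P1 = 2" and "vec_space.rank 4 P2 = 2"
    and "P1 + P2 = kron 2 2 (1\<^sub>m 2) (1\<^sub>m 2)"
  shows "\<not> extremal_tester 2 2 2 [(1/2) \<cdot>\<^sub>m P1, (1/2) \<cdot>\<^sub>m P2] \<longleftrightarrow>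
    ((\<exists>v. is_unit_vec 2 v \<and> P1 = kron 2 2 (1\<^sub>m 2) (ketbra v)) \<or>
     (\<exists>f e fp. is_unit_vec 2 f \<and> is_unit_vec 2 e \<and> is_unit_vec 2 fp \<and> cinner f fp = 0 \<and>
        kron_vec 2 2 f e \<in> supp P1 \<and> kron_vec 2 2 fp e \<in> supp P2))"
proof -
  interpret complementary_projectors P1 P2
    using assms(1,2,5) kron_id_id by unfold_locales simp_all
  show ?thesis
    using not_extremal_iff_commuting commuting_iff_conditions[OF assms(3,4)]
    unfolding local_form_def product_split_def by blast
qed

end
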